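(* In the setting of the context, for each $s$ let $\sigma_{n,s}:\{1,\dots,n\}\to\{1,\dots,n\}$ be any permutation and define \[ Y^\ast_{ni}=\sum_{s=1}^{\mathcal{S}}\sum_{a\in\{0,1\}}Y_{\sigma_{n,s}(i)}(a,s)\mathbb{I}\{A_{ni}=a,\mathbb{S}(Z_i)=s\},\quad Z^\ast_{ni}=\sum_{s=1}^{\mathcal{S}}Z_{\sigma_{n,s}(i)}(s)\mathbb{I}\{\mathbb{S}(Z_i)=s\}, \] $X^\ast_{ni}=(Y^\ast_{ni},A_{ni},Z^\ast_{ni})$ and $\mathbf{X}^\ast_n=(X^\ast_{n1},\dots,X^\ast_{nn})'$. Then the joint distribution of $(\mathbf{X}^\ast_n,\mathbf{S}_n)$ equals that of $(\mathbf{X}_n,\mathbf{S}_n)$, and $\mathbf{X}_n$ and $\mathbf{X}^\ast_n$ are conditionally independent given $(\mathbf{A}_n,\mathbf{S}_n)$.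
   Context: Population: $W=(Y(0),Y(1),Z')'\in\mathbb{R}^{2+k}$; $\mathbf{Q}$ a family of distributions of $W$ each with a density w.r.t. a product of $\sigma$-finite measures $\mu_0\otimes\mu_1\otimes\mu_Z$ and $\mathbb{E}_Q[Y(a)^2]<\infty$; true $Q_0\in\mathbf{Q}$. Known measurable $\mathbb{S}:\mathbb{R}^k\to\{1,\dots,\mathcal{S}\}$, $\pi(s)\in(0,1)$. Sample $\mathbf{W}=\{W_i=(Y_i(0),Y_i(1),Z_i)\}_{i\in\mathbb{N}}$ i.i.d. $Q_0$; treatments $\mathbf{A}_n=(A_{n1},\dots,A_{nn})\in\{0,1\}^n$ for each $n$; $S_i=\mathbb{S}(Z_i)$, $\mathbf{S}_n=(S_1,\dots,S_n)$; observed $X_{ni}=(Y_{ni},A_{ni},Z_i)$ with $Y_{ni}=Y_i(1)A_{ni}+Y_i(0)(1-A_{ni})$, $\mathbf{X}_n=(X_{n1},\dots,X_{nn})'$; $(W_1,\dots,W_n)$ and $\mathbf{A}_n$ conditionally independent given $\mathbf{S}_n$; $\Pr(\mathbf{A}_n=\mathbf{a}\mid\mathbf{S}_n=\mathbf{s})$ known and not depending on $Q_0$; $N_n(1,s)/N_n(s)\to\pi(s)$ in probability. Coupling construction: $\mathbf{W}^\ast=\{W_i(s)=(Y_i(0,s),Y_i(1,s),Z_i(s)'):i\in\mathbb{N},s\in\{1,\dots,\mathcal{S}\}\}$ is a collection of random vectors on the same probability space, independent across $(i,s)$, with $W_i(s)$ distributed as $W$ conditional on $\mathbb{S}(Z)=s$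 under $Q_0$, and $\mathbf{W}^\ast$ independent of $\mathbf{W}$ and of all $\mathbf{A}_n$, $n\in\mathbb{N}$. *)

theory Defs
  imports "HOL-Probability.Probability"
begin

type_synonym 'k unit_rec = "real \<times> real \<times> (real ^ 'k)"
  (* a realisation of W = (Y(0), Y(1), Z) with Z in R^k *)

definition cond_indep_disc ::
  "'o measure \<Rightarrow> 'x measure \<Rightarrow> ('o \<Rightarrow> 'x) \<Rightarrow> 'y measure \<Rightarrow> ('o \<Rightarrow> 'y) \<Rightarrow> ('o \<Rightarrow> 'c) \<Rightarrow> bool" where
  "cond_indep_disc M MX X MY Y C \<longleftrightarrow>
     (\<forall>c. \<forall>B\<in>sets MX. \<forall>B'\<in>sets MY.
        measure M {\<omega>\<in>space M. X \<omega> \<in> B \<and> Y \<omega> \<in> B' \<and> C \<omega> = c} * measure M {\<omega>\<in>space M. C \<omega> = c}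
      = measure M {\<omega>\<in>space M. X \<omega> \<in> B \<and> C \<omega> = c} * measure M {\<omega>\<in>space M. Y \<omega> \<in> B' \<and> C \<omega> = c})"

definition Y0 :: "'k unit_rec \<Rightarrow> real" where "Y0 w = fst w"
definition Y1 :: "'k unit_rec \<Rightarrow> real" where "Y1 w = fst (snd w)"
definition Zc :: "'k unit_rec \<Rightarrow> real ^ 'k" where "Zc w = snd (snd w)"

text \<open>Measure on observations X = (Y, A, Z); the treatment A in {0,1} is encoded as bool
  (True = 1).\<close>
definition obs_measure :: "(real \<times> bool \<times> (real ^ 'k)) measure" where
  "obs_measure = borel \<Otimes>\<^sub>M (count_space UNIV \<Otimes>\<^sub>M borel)"

definition obs :: "'k unit_rec \<Rightarrow> bool \<Rightarrow> real \<times> bool \<times> (real ^ 'k)" where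
  "obs w a = (Y1 w * of_bool a + Y0 w * (1 - of_bool a), a, Zc w)"

text \<open>Coupled observation X*_{ni}, given the strata map, the number of strata SS,
  the permutations sig s, the coupling variables Wst j s (value at a fixed outcome),
  the treatment a = A_{ni} and the stratum-determining covariate z = Z_i.\<close>
definition obs_star ::
  "((real ^ 'k) \<Rightarrow> nat) \<Rightarrow> nat \<Rightarrow> (nat \<Rightarrow> nat \<Rightarrow> nat) \<Rightarrow> (nat \<Rightarrow> nat \<Rightarrow> 'k unit_rec)
     \<Rightarrow> nat \<Rightarrow> bool \<Rightarrow> real ^ 'k \<Rightarrow> real \<times> bool \<times> (real ^ 'k)" where
  "obs_star Sf SS sig Wst i a z =
     ((\<Sum>s\<in>{1..SS}. Y0 (Wst (sig s i) s) * of_bool (a = False \<and> Sf z = s)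
                   + Y1 (Wst (sig s i) s) * of_bool (a = True \<and> Sf z = s)),
      a,
      (\<Sum>s\<in>{1..SS}. of_bool (Sf z = s) *\<^sub>R Zc (Wst (sig s i) s)))"

end

theory Submission
  imports Defs
begin

text \<open>Within stratum \<open>s\<close> the coupling variables \<open>W\<^sub>j(s)\<close> are i.i.d. draws from \<open>Q\<^sub>0\<close>
  conditioned on stratum \<open>s\<close>. As each \<open>\<sigma>\<^sub>n\<^sub>,\<^sub>s\<close> is a permutation, for a fixed stratum
  vector \<open>c\<close> the units used by \<open>X\<^sup>*\<^sub>n\<close> are distinct coupling variables, so the vector
  \<open>U\<^sub>c\<close> they form has the law of \<open>(W\<^sub>1,\<dots>,W\<^sub>n)\<close> conditioned on \<open>S\<^sub>n = c\<close>, and it is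
  independent of \<open>(W, A)\<close>. On the event \<open>(A\<^sub>n, S\<^sub>n) = (a, c)\<close> the vector \<open>X\<^sup>*\<^sub>n\<close> is a
  fixed function of \<open>U\<^sub>c\<close>, which gives the conditional independence. Since \<open>A\<^sub>n\<close> is
  conditionally independent of the units given \<open>S\<^sub>n\<close>, on that event \<open>X\<^sub>n\<close> is the same
  function of a vector with the same conditional law, which gives the equality in distribution.\<close>

lemma uniform_measure_PiM_PiE:
  fixes Q :: "'a measure"
  assumes I: "finite I" and Q: "prob_space Q"
    and T: "\<And>i. i \<in> I \<Longrightarrow> T i \<in> sets Q" and T_pos: "\<And>i. i \<in> I \<Longrightarrow> emeasure Q (T i) \<noteq> 0"
  shows "uniform_measure (PiM I (\<lambda>_. Q)) (PiE I T) = PiM I (\<lambda>i. uniform_measure Q (T i))"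
proof -
  interpret Q: prob_space Q by fact
  interpret P: product_prob_space "\<lambda>_. Q" ..
  \<comment> \<open>\<open>product_prob_space\<close> needs every factor, also those outside \<open>I\<close>, to be a probability space\<close>
  define T' where "T' i = (if i \<in> I then T i else space Q)" for i
  have T': "T' i \<in> sets Q" "emeasure Q (T' i) \<noteq> 0" for i
    using T T_pos by (auto simp: T'_def Q.emeasure_space_1)
  have PiE_T': "PiE I T' = PiE I T"
    by (auto simp: T'_def PiE_iff)
  interpret U: product_prob_space "\<lambda>i. uniform_measure Q (T' i)"
    unfolding product_prob_space_def product_sigma_finite_def product_prob_space_axioms_def
    using T' by (auto intro!: prob_space_uniform_measure prob_space_imp_sigma_finite)
  have "uniform_measure (PiM I (\<lambda>_. Q)) (PiE I T') = PiM I (\<lambda>i. uniform_measure Q (T' i))"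
  proof (rule U.PiM_eqI[OF I])
    fix B assume B: "\<And>i. i \<in> I \<Longrightarrow> B i \<in> sets (uniform_measure Q (T' i))"
    have "PiE I T' \<inter> PiE I B = PiE I (\<lambda>i. T' i \<inter> B i)"
      by auto
    then have "emeasure (uniform_measure (PiM I (\<lambda>_. Q)) (PiE I T')) (PiE I B)
        = (\<Prod>i\<in>I. emeasure Q (T' i \<inter> B i)) / (\<Prod>i\<in>I. emeasure Q (T' i))"
      using I B T' by (simp add: P.emeasure_PiM sets_PiM_I_finite)
    also have "\<dots> = (\<Prod>i\<in>I. emeasure Q (T' i \<inter> B i) / emeasure Q (T' i))"
    proof -
      have pos: "0 < measure Q (T' i)" for i
        using T' by (simp add: Q.emeasure_eq_measure zero_less_measure_iff)
      have "(\<Prod>i\<in>I. emeasure Q (T' i \<inter> B i)) / (\<Prod>i\<in>I. emeasure Q (T' i))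
          = ennreal (\<Prod>i\<in>I. measure Q (T' i \<inter> B i)) / ennreal (\<Prod>i\<in>I. measure Q (T' i))"
        by (simp add: Q.emeasure_eq_measure prod_ennreal)
      also have "\<dots> = ennreal ((\<Prod>i\<in>I. measure Q (T' i \<inter> B i)) / (\<Prod>i\<in>I. measure Q (T' i)))"
        using pos by (intro divide_ennreal) (auto intro!: prod_pos prod_nonneg)
      also have "\<dots> = (\<Prod>i\<in>I. ennreal (measure Q (T' i \<inter> B i) / measure Q (T' i)))"
        by (simp add: prod_dividef prod_ennreal)
      finally show ?thesis
        using pos by (simp add: Q.emeasure_eq_measure divide_ennreal)
    qed
    finally show "emeasure (uniform_measure (PiM I (\<lambda>_. Q)) (PiE I T')) (PiE I B)
        = (\<Prod>i\<in>I. emeasure (uniform_measure Q (T' i)) (B i))"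
      using B T' by simp
  qed (auto intro!: sets_PiM_cong)
  then show ?thesis
    by (simp add: PiE_T' T'_def cong: PiM_cong)
qed

lemma (in prob_space) indep_sets_reindex:
  assumes indep: "indep_sets F (f ` I)" and inj: "inj_on f I"
  shows "indep_sets (\<lambda>i. F (f i)) I"
  unfolding indep_sets_def
proof (intro conjI ballI allI impI)
  show "F (f i) \<subseteq> events" if "i \<in> I" for i
    using indep that unfolding indep_sets_def by auto
next
  fix J A assume J: "J \<subseteq> I" "J \<noteq> {}" "finite J" and A: "A \<in> Pi J (\<lambda>i. F (f i))"
  have inj_J: "inj_on f J"
    using inj J(1) by (rule inj_on_subset)
  define A' where "A' y = A (the_inv_into J f y)" for y
  have A'_f: "A' (f j) = A j" if "j \<in> J" for j
    using that inj_J by (simp add: A'_def the_inv_into_f_f)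
  have "prob (\<Inter>y\<in>f ` J. A' y) = (\<Prod>y\<in>f ` J. prob (A' y))"
    using J A A'_f by (intro indep_setsD[OF indep]) (auto simp: Pi_iff)
  then show "prob (\<Inter>j\<in>J. A j) = (\<Prod>j\<in>J. prob (A j))"
    using A'_f by (simp add: prod.reindex[OF inj_J])
qed

lemma (in prob_space) indep_vars_reindex:
  assumes "indep_vars N X (f ` I)" and "inj_on f I"
  shows "indep_vars (\<lambda>i. N (f i)) (\<lambda>i. X (f i)) I"
  using assms unfolding indep_vars_def2
  by (auto intro: indep_sets_reindex[where F="\<lambda>j. {X j -` A \<inter> space M |A. A \<in> sets (N j)}"])

lemma (in prob_space) distr_PiM_indep_vars:
  assumes indep: "indep_vars N X I" and X: "\<And>i. i \<in> I \<Longrightarrow> random_variable (N i) (X i)"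
  shows "distr M (PiM I N) (\<lambda>x. \<lambda>i\<in>I. X i x) = PiM I (\<lambda>i. distr M (N i) (X i))"
proof (cases "I = {}")
  case True
  have "(\<lambda>x. \<lambda>i\<in>I. X i x) \<in> M \<rightarrow>\<^sub>M PiM I N"
    using X by measurable
  then show ?thesis
    using True by (intro measure_eqI) (auto simp: sets_PiM_empty emeasure_distr emeasure_space_1 restrict_def)
next
  case False
  then show ?thesis
    using indep indep_vars_iff_distr_eq_PiM'[OF False X] by simp
qed

lemma singleton_in_sets_PiM_count_space:
  assumes "finite I" and "x \<in> extensional I"
  shows "{x} \<in> sets (PiM I (\<lambda>_. count_space UNIV))"
  using sets_PiM_I_finite[OF assms(1), of "\<lambda>i. {x i}"] by (simp add: PiE_singleton[OF assms(2)])

lemma measurable_preimage_in_vimage_algebra: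
  assumes h: "h \<in> N \<rightarrow>\<^sub>M L" and K: "K \<in> sets L" and f: "f \<in> X \<rightarrow> space N"
  shows "{x\<in>X. h (f x) \<in> K} \<in> sets (vimage_algebra X f N)"
proof -
  have "(\<lambda>x. h (f x)) \<in> vimage_algebra X f N \<rightarrow>\<^sub>M L"
    using measurable_vimage_algebra1[OF f] h by (rule measurable_compose)
  from measurable_sets[OF this K] show ?thesis
    by (simp add: vimage_def Int_def conj_commute)
qed

lemma (in prob_space) cond_indep_disc_indep_set:
  assumes indep: "indep_set S1 S2"
    and X_events: "\<And>k B. k \<in> C ` space M \<Longrightarrow> B \<in> sets MX \<Longrightarrow> {\<omega>\<in>space M. X \<omega> \<in> B \<and> C \<omega> = k} \<in> S2"
    and C_events: "\<And>k. k \<in> C ` space M \<Longrightarrow> {\<omega>\<in>space M. C \<omega> = k} \<in> S2"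
    and Y_events: "\<And>k B. k \<in> C ` space M \<Longrightarrow> B \<in> sets MY \<Longrightarrow> {\<omega>\<in>space M. Y k \<omega> \<in> B} \<in> S1"
    and Z_eq: "\<And>\<omega>. \<omega> \<in> space M \<Longrightarrow> Z \<omega> = Y (C \<omega>) \<omega>"
  shows "cond_indep_disc M MX X MY Z C"
  unfolding cond_indep_disc_def
proof (intro allI ballI)
  fix k B B' assume B: "B \<in> sets MX" and B': "B' \<in> sets MY"
  show "prob {\<omega>\<in>space M. X \<omega> \<in> B \<and> Z \<omega> \<in> B' \<and> C \<omega> = k} * prob {\<omega>\<in>space M. C \<omega> = k}
      = prob {\<omega>\<in>space M. X \<omega> \<in> B \<and> C \<omega> = k} * prob {\<omega>\<in>space M. Z \<omega> \<in> B' \<and> C \<omega> = k}"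
  proof (cases "k \<in> C ` space M")
    case True
    let ?Y = "{\<omega>\<in>space M. Y k \<omega> \<in> B'}"
    have "{\<omega>\<in>space M. X \<omega> \<in> B \<and> Z \<omega> \<in> B' \<and> C \<omega> = k} = ?Y \<inter> {\<omega>\<in>space M. X \<omega> \<in> B \<and> C \<omega> = k}"
      and "{\<omega>\<in>space M. Z \<omega> \<in> B' \<and> C \<omega> = k} = ?Y \<inter> {\<omega>\<in>space M. C \<omega> = k}"
      using Z_eq by auto
    then show ?thesis
      using indep_setD[OF indep Y_events[OF True B'] X_events[OF True B]]
        indep_setD[OF indep Y_events[OF True B'] C_events[OF True]] by simp
  next
    case False
    then have "\<forall>\<omega>\<in>space M. C \<omega> \<noteq> k"
      by auto
    then show ?thesis
      by (simp cong: conj_cong)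
  qed
qed

lemma (in prob_space) prob_eq_by_independent_conditional_copy:
  assumes indep: "indep_set S1 S2"
    and U_event: "{\<omega>\<in>space M. U \<omega> \<in> F} \<in> S1"
    and AC_event: "{\<omega>\<in>space M. A \<omega> = a \<and> C \<omega> = c} \<in> S2"
    and C_event: "{\<omega>\<in>space M. C \<omega> = c} \<in> events"
    and cond_indep: "cond_indep_disc M MV V MA A C" and F: "F \<in> sets MV" and a: "{a} \<in> sets MA"
    and law: "prob {\<omega>\<in>space M. V \<omega> \<in> F \<and> C \<omega> = c}
      = prob {\<omega>\<in>space M. U \<omega> \<in> F} * prob {\<omega>\<in>space M. C \<omega> = c}"
  shows "prob {\<omega>\<in>space M. V \<omega> \<in> F \<and> A \<omega> = a \<and> C \<omega> = c}
    = prob {\<omega>\<in>space M. U \<omega> \<in> F \<and> A \<omega> = a \<and> C \<omega> = c}"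
proof -
  let ?C = "{\<omega>\<in>space M. C \<omega> = c}" and ?AC = "{\<omega>\<in>space M. A \<omega> = a \<and> C \<omega> = c}"
  have "{\<omega>\<in>space M. U \<omega> \<in> F \<and> A \<omega> = a \<and> C \<omega> = c} = {\<omega>\<in>space M. U \<omega> \<in> F} \<inter> ?AC"
    by auto
  then have rhs: "prob {\<omega>\<in>space M. U \<omega> \<in> F \<and> A \<omega> = a \<and> C \<omega> = c} = prob {\<omega>\<in>space M. U \<omega> \<in> F} * prob ?AC"
    using indep_setD[OF indep U_event AC_event] by simp
  have lhs: "prob {\<omega>\<in>space M. V \<omega> \<in> F \<and> A \<omega> = a \<and> C \<omega> = c} * prob ?C
      = prob {\<omega>\<in>space M. U \<omega> \<in> F} * prob ?AC * prob ?C"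
  proof -
    have "prob {\<omega>\<in>space M. V \<omega> \<in> F \<and> A \<omega> \<in> {a} \<and> C \<omega> = c} * prob ?C
        = prob {\<omega>\<in>space M. V \<omega> \<in> F \<and> C \<omega> = c} * prob {\<omega>\<in>space M. A \<omega> \<in> {a} \<and> C \<omega> = c}"
      using cond_indep F a unfolding cond_indep_disc_def by blast
    then show ?thesis
      by (simp add: law)
  qed
  show ?thesis
  proof (cases "prob ?C = 0")
    case True
    \<comment> \<open>both sides are bounded by the null event \<open>C = c\<close>\<close>
    have "prob {\<omega>\<in>space M. V \<omega> \<in> F \<and> A \<omega> = a \<and> C \<omega> = c} \<le> prob ?C" "prob ?AC \<le> prob ?C"
      using C_event by (auto intro!: finite_measure_mono)
    then show ?thesis
      using True rhs by (simp add: measure_le_0_iff)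
  qed (use lhs rhs in simp)
qed

lemma (in prob_space) distr_eq_finite_partition:
  assumes X: "X \<in> M \<rightarrow>\<^sub>M N" and X': "X' \<in> M \<rightarrow>\<^sub>M N"
    and K: "finite K" "C ` space M \<subseteq> K" and C: "\<And>k. k \<in> K \<Longrightarrow> {\<omega>\<in>space M. C \<omega> = k} \<in> events"
    and eq: "\<And>k E. k \<in> K \<Longrightarrow> E \<in> sets N \<Longrightarrow>
      prob {\<omega>\<in>space M. X \<omega> \<in> E \<and> C \<omega> = k} = prob {\<omega>\<in>space M. X' \<omega> \<in> E \<and> C \<omega> = k}"
  shows "distr M N X = distr M N X'"
proof (rule measure_eqI)
  fix E assume "E \<in> sets (distr M N X)"
  then have E: "E \<in> sets N"
    by simp
  have total: "prob (Y -` E \<inter> space M) = (\<Sum>k\<in>K. prob {\<omega>\<in>space M. Y \<omega> \<in> E \<and> C \<omega> = k})"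
    if Y: "Y \<in> M \<rightarrow>\<^sub>M N" for Y
  proof -
    have "{\<omega>\<in>space M. Y \<omega> \<in> E \<and> C \<omega> = k} \<in> events" if "k \<in> K" for k
    proof -
      have "{\<omega>\<in>space M. Y \<omega> \<in> E \<and> C \<omega> = k} = (Y -` E \<inter> space M) \<inter> {\<omega>\<in>space M. C \<omega> = k}"
        by auto
      then show ?thesis
        using measurable_sets[OF Y E] C[OF that] by simp
    qed
    moreover have "Y -` E \<inter> space M = (\<Union>k\<in>K. {\<omega>\<in>space M. Y \<omega> \<in> E \<and> C \<omega> = k})"
      using K(2) by auto
    ultimately show ?thesis
      using K(1) by (auto intro!: measure_finite_Union simp: disjoint_family_on_def)
  qed
  show "emeasure (distr M N X) E = emeasure (distr M N X') E"
    using total[OF X] total[OF X'] eq E X X' by (simp add: emeasure_distr emeasure_eq_measure)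
qed simp

lemma measurable_Y0 [measurable]: "(Y0 :: 'k::finite unit_rec \<Rightarrow> real) \<in> borel_measurable borel"
  unfolding Y0_def by (intro borel_measurable_continuous_onI continuous_intros)

lemma measurable_Y1 [measurable]: "(Y1 :: 'k::finite unit_rec \<Rightarrow> real) \<in> borel_measurable borel"
  unfolding Y1_def by (intro borel_measurable_continuous_onI continuous_intros)

lemma measurable_Zc [measurable]: "(Zc :: 'k::finite unit_rec \<Rightarrow> real ^ 'k) \<in> borel \<rightarrow>\<^sub>M borel"
  unfolding Zc_def by (intro borel_measurable_continuous_onI continuous_intros)

lemma measurable_obs [measurable]:
  assumes [measurable]: "f \<in> N \<rightarrow>\<^sub>M (borel :: 'k::finite unit_rec measure)" "a \<in> N \<rightarrow>\<^sub>M count_space UNIV"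
  shows "(\<lambda>x. obs (f x) (a x)) \<in> N \<rightarrow>\<^sub>M obs_measure"
  unfolding obs_def obs_measure_def by measurable

lemma measurable_obs_star [measurable]:
  fixes V :: "'a \<Rightarrow> nat \<Rightarrow> nat \<Rightarrow> 'k::finite unit_rec"
  assumes [measurable]: "\<And>j s. (\<lambda>x. V x j s) \<in> N \<rightarrow>\<^sub>M borel" "a \<in> N \<rightarrow>\<^sub>M count_space UNIV"
    "z \<in> N \<rightarrow>\<^sub>M borel" "Sf \<in> borel \<rightarrow>\<^sub>M count_space UNIV"
  shows "(\<lambda>x. obs_star Sf SS sig (V x) i (a x) (z x)) \<in> N \<rightarrow>\<^sub>M obs_measure"
  unfolding obs_star_def obs_measure_def by measurable

lemma obs_star_eq_obs:
  assumes "Sf z \<in> {1..SS}"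
  shows "obs_star Sf SS sig V i a z = obs (V (sig (Sf z) i) (Sf z)) a"
proof -
  have pick: "(\<Sum>s\<in>{1..SS}. of_bool (Sf z = s) *\<^sub>R g s) = g (Sf z)" for g :: "nat \<Rightarrow> 'b::real_vector"
  proof -
    have "(\<Sum>s\<in>{1..SS}. of_bool (Sf z = s) *\<^sub>R g s) = (\<Sum>s\<in>{1..SS}. if s = Sf z then g (Sf z) else 0)"
      by (intro sum.cong) auto
    then show ?thesis
      using assms by simp
  qed
  let ?Y = "\<lambda>s. Y1 (V (sig s i) s) * of_bool a + Y0 (V (sig s i) s) * (1 - of_bool a)"
  have "(\<Sum>s\<in>{1..SS}. Y0 (V (sig s i) s) * of_bool (a = False \<and> Sf z = s)
        + Y1 (V (sig s i) s) * of_bool (a = True \<and> Sf z = s))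
      = (\<Sum>s\<in>{1..SS}. of_bool (Sf z = s) *\<^sub>R ?Y s)"
    by (intro sum.cong) (auto simp: of_bool_def)
  then show ?thesis
    unfolding obs_star_def obs_def by (simp only: pick)
qed

locale stratified_coupling = prob_space M
  for M :: "'o measure" and Q0 :: "'k::finite unit_rec measure"
    and Sf :: "real ^ 'k \<Rightarrow> nat" and SS :: nat
    and W :: "nat \<Rightarrow> 'o \<Rightarrow> 'k unit_rec" and A :: "nat \<Rightarrow> nat \<Rightarrow> 'o \<Rightarrow> bool"
    and Wst :: "nat \<Rightarrow> nat \<Rightarrow> 'o \<Rightarrow> 'k unit_rec" and n :: nat and sig :: "nat \<Rightarrow> nat \<Rightarrow> nat" +
  assumes Sf_meas: "Sf \<in> borel \<rightarrow>\<^sub>M count_space UNIV"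
    and Sf_range: "\<And>z. Sf z \<in> {1..SS}"
    and W_rv: "\<And>i. W i \<in> M \<rightarrow>\<^sub>M borel"
    and W_indep: "indep_vars (\<lambda>_. borel) W UNIV"
    and W_distr: "\<And>i. distr M borel (W i) = Q0"
    and A_rv: "\<And>i. A n i \<in> M \<rightarrow>\<^sub>M count_space UNIV"
    and A_cond_indep: "cond_indep_disc M
        (Pi\<^sub>M {1..n} (\<lambda>_. borel)) (\<lambda>\<omega>. \<lambda>i\<in>{1..n}. W i \<omega>)
        (Pi\<^sub>M {1..n} (\<lambda>_. count_space UNIV)) (\<lambda>\<omega>. \<lambda>i\<in>{1..n}. A n i \<omega>)
        (\<lambda>\<omega>. \<lambda>i\<in>{1..n}. Sf (Zc (W i \<omega>)))"
    and Wst_rv: "\<And>i s. Wst i s \<in> M \<rightarrow>\<^sub>M borel"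
    and Wst_indep: "indep_vars (\<lambda>_. borel) (\<lambda>(i, s). Wst i s) (UNIV \<times> {1..SS})"
    and Wst_distr: "\<And>i s B. s \<in> {1..SS} \<Longrightarrow> B \<in> sets borel \<Longrightarrow>
        prob {\<omega>\<in>space M. Wst i s \<omega> \<in> B}
          = measure Q0 {w\<in>space Q0. w \<in> B \<and> Sf (Zc w) = s} / measure Q0 {w\<in>space Q0. Sf (Zc w) = s}"
    and Q0_strata_pos: "\<And>s. s \<in> {1..SS} \<Longrightarrow> measure Q0 {w\<in>space Q0. Sf (Zc w) = s} > 0"
    and Wst_indep_rest: "indep_set
        (sets (vimage_algebra (space M) (\<lambda>\<omega>. \<lambda>p\<in>UNIV \<times> {1..SS}. Wst (fst p) (snd p) \<omega>)
                 (Pi\<^sub>M (UNIV \<times> {1..SS}) (\<lambda>_. borel))))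
        (sets (vimage_algebra (space M) (\<lambda>\<omega>. (\<lambda>i. W i \<omega>, \<lambda>m i. A m i \<omega>))
                 (Pi\<^sub>M UNIV (\<lambda>_. borel) \<Otimes>\<^sub>M Pi\<^sub>M UNIV (\<lambda>_. Pi\<^sub>M UNIV (\<lambda>_. count_space UNIV)))))"
    and sig_perm: "\<And>s. s \<in> {1..SS} \<Longrightarrow> sig s permutes {1..n}"
begin

definition stratum :: "nat \<Rightarrow> 'k unit_rec set" where
  "stratum s = {w. Sf (Zc w) = s}"

definition stratum_vectors :: "(nat \<Rightarrow> nat) set" where
  "stratum_vectors = PiE {1..n} (\<lambda>_. {1..SS})"

definition sample :: "'o \<Rightarrow> nat \<Rightarrow> 'k unit_rec" where
  "sample \<omega> = (\<lambda>i\<in>{1..n}. W i \<omega>)"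

definition treatment :: "'o \<Rightarrow> nat \<Rightarrow> bool" where
  "treatment \<omega> = (\<lambda>i\<in>{1..n}. A n i \<omega>)"

definition strata :: "'o \<Rightarrow> nat \<Rightarrow> nat" where
  "strata \<omega> = (\<lambda>i\<in>{1..n}. Sf (Zc (W i \<omega>)))"

definition coupled_sample :: "(nat \<Rightarrow> nat) \<Rightarrow> 'o \<Rightarrow> nat \<Rightarrow> 'k unit_rec" where
  "coupled_sample c \<omega> = (\<lambda>i\<in>{1..n}. Wst (sig (c i) i) (c i) \<omega>)"

definition observe :: "(nat \<Rightarrow> bool) \<Rightarrow> (nat \<Rightarrow> 'k unit_rec) \<Rightarrow> nat \<Rightarrow> real \<times> bool \<times> (real ^ 'k)" where
  "observe a u = (\<lambda>i\<in>{1..n}. obs (u i) (a i))"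

definition observed :: "'o \<Rightarrow> nat \<Rightarrow> real \<times> bool \<times> (real ^ 'k)" where
  "observed \<omega> = (\<lambda>i\<in>{1..n}. obs (W i \<omega>) (A n i \<omega>))"

definition coupled_observed :: "'o \<Rightarrow> nat \<Rightarrow> real \<times> bool \<times> (real ^ 'k)" where
  "coupled_observed \<omega> = (\<lambda>i\<in>{1..n}. obs_star Sf SS sig (\<lambda>j s. Wst j s \<omega>) i (A n i \<omega>) (Zc (W i \<omega>)))"

definition coupling_events :: "'o set set" where
  "coupling_events = sets (vimage_algebra (space M) (\<lambda>\<omega>. \<lambda>p\<in>UNIV \<times> {1..SS}. Wst (fst p) (snd p) \<omega>)
     (Pi\<^sub>M (UNIV \<times> {1..SS}) (\<lambda>_. borel)))"

definition sample_events :: "'o set set" where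
  "sample_events = sets (vimage_algebra (space M) (\<lambda>\<omega>. (\<lambda>i. W i \<omega>, \<lambda>m i. A m i \<omega>))
     (Pi\<^sub>M UNIV (\<lambda>_. borel) \<Otimes>\<^sub>M Pi\<^sub>M UNIV (\<lambda>_. Pi\<^sub>M UNIV (\<lambda>_. count_space UNIV))))"

lemma observed_eq_observe: "observed \<omega> = observe (treatment \<omega>) (sample \<omega>)"
  unfolding observed_def observe_def treatment_def sample_def by (intro restrict_ext) simp

lemma coupled_observed_eq_observe: "coupled_observed \<omega> = observe (treatment \<omega>) (coupled_sample (strata \<omega>) \<omega>)"
  unfolding coupled_observed_def observe_def treatment_def coupled_sample_def strata_def
  by (intro restrict_ext) (simp add: obs_star_eq_obs[OF Sf_range])

lemma strata_in_stratum_vectors: "strata \<omega> \<in> stratum_vectors"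
  using Sf_range by (simp add: strata_def stratum_vectors_def)

lemma strata_eq_iff:
  assumes "c \<in> stratum_vectors"
  shows "strata \<omega> = c \<longleftrightarrow> sample \<omega> \<in> PiE {1..n} (\<lambda>i. stratum (c i))"
  using assms by (auto simp: strata_def sample_def stratum_def stratum_vectors_def PiE_iff extensional_def)

lemma measurable_sample [measurable]: "sample \<in> M \<rightarrow>\<^sub>M PiM {1..n} (\<lambda>_. borel)"
  unfolding sample_def using W_rv by measurable

lemma measurable_treatment [measurable]: "treatment \<in> M \<rightarrow>\<^sub>M PiM {1..n} (\<lambda>_. count_space UNIV)"
  unfolding treatment_def using A_rv by measurable

lemma measurable_strata [measurable]: "strata \<in> M \<rightarrow>\<^sub>M PiM {1..n} (\<lambda>_. count_space UNIV)"
  unfolding strata_def using W_rv Sf_meas by measurable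

lemma measurable_coupled_sample [measurable]: "coupled_sample c \<in> M \<rightarrow>\<^sub>M PiM {1..n} (\<lambda>_. borel)"
  unfolding coupled_sample_def using Wst_rv by measurable

lemma measurable_observe [measurable]: "observe a \<in> PiM {1..n} (\<lambda>_. borel) \<rightarrow>\<^sub>M PiM {1..n} (\<lambda>_. obs_measure)"
  unfolding observe_def by measurable

lemma measurable_observed [measurable]: "observed \<in> M \<rightarrow>\<^sub>M PiM {1..n} (\<lambda>_. obs_measure)"
  unfolding observed_def using W_rv A_rv by measurable

lemma measurable_coupled_observed [measurable]: "coupled_observed \<in> M \<rightarrow>\<^sub>M PiM {1..n} (\<lambda>_. obs_measure)"
  unfolding coupled_observed_def using W_rv A_rv Wst_rv Sf_meas by measurable

lemma sets_Q0: "sets Q0 = sets borel"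
  using W_distr[of 0] by (metis sets_distr)

lemma space_Q0: "space Q0 = UNIV"
  using sets_eq_imp_space_eq[OF sets_Q0] by simp

lemma prob_space_Q0: "prob_space Q0"
  using W_distr[of 0] W_rv by (metis prob_space_distr)

lemma stratum_in_sets: "stratum s \<in> sets Q0"
proof -
  have "(\<lambda>w :: 'k unit_rec. Sf (Zc w)) \<in> borel \<rightarrow>\<^sub>M count_space UNIV"
    using Sf_meas by measurable
  from measurable_sets[OF this, of "{s}"] show ?thesis
    by (simp add: sets_Q0 stratum_def vimage_def)
qed

lemma measure_stratum_pos:
  assumes "s \<in> {1..SS}"
  shows "0 < measure Q0 (stratum s)"
  using Q0_strata_pos[OF assms] by (simp add: stratum_def space_Q0)

lemma distr_Wst:
  assumes s: "s \<in> {1..SS}"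
  shows "distr M borel (Wst j s) = uniform_measure Q0 (stratum s)"
proof -
  interpret Q0: prob_space Q0
    by (rule prob_space_Q0)
  have "distr M Q0 (Wst j s) = uniform_measure Q0 (stratum s)"
  proof (rule uniform_distrI)
    show "Wst j s \<in> M \<rightarrow>\<^sub>M Q0"
      using Wst_rv by (simp add: measurable_cong_sets[OF refl sets_Q0])
    show "stratum s \<in> sets Q0" "emeasure Q0 (stratum s) \<noteq> \<infinity>" "emeasure Q0 (stratum s) \<noteq> 0"
      using stratum_in_sets measure_stratum_pos[OF s] by (simp_all add: Q0.emeasure_eq_measure)
  next
    fix B assume "B \<in> sets Q0"
    then have "prob (Wst j s -` B \<inter> space M) = measure Q0 (stratum s \<inter> B) / measure Q0 (stratum s)"
      using Wst_distr[OF s] by (simp add: sets_Q0 space_Q0 stratum_def vimage_def Int_def conj_commute)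
    then show "emeasure M (Wst j s -` B \<inter> space M) = emeasure Q0 (stratum s \<inter> B) / emeasure Q0 (stratum s)"
      using measure_stratum_pos[OF s] by (simp add: emeasure_eq_measure Q0.emeasure_eq_measure divide_ennreal)
  qed
  then show ?thesis
    by (simp add: distr_cong[OF refl sets_Q0])
qed

lemma distr_sample: "distr M (PiM {1..n} (\<lambda>_. borel)) sample = PiM {1..n} (\<lambda>_. Q0)"
proof -
  have "indep_vars (\<lambda>_. borel) W {1..n}"
    using W_indep by (rule indep_vars_subset) simp
  then show ?thesis
    unfolding sample_def using W_rv W_distr by (simp add: distr_PiM_indep_vars)
qed

lemma distr_coupled_sample:
  assumes c: "c \<in> stratum_vectors"
  shows "distr M (PiM {1..n} (\<lambda>_. borel)) (coupled_sample c)
    = PiM {1..n} (\<lambda>i. uniform_measure Q0 (stratum (c i)))"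
proof -
  define \<iota> where "\<iota> i = (sig (c i) i, c i)" for i
  have c_range: "c i \<in> {1..SS}" if "i \<in> {1..n}" for i
    using c that by (auto simp: stratum_vectors_def)
  \<comment> \<open>the permutations make the coupling variables of distinct units distinct, hence independent\<close>
  have "inj_on \<iota> {1..n}"
  proof (rule inj_onI)
    fix i j assume ij: "i \<in> {1..n}" "j \<in> {1..n}" and "\<iota> i = \<iota> j"
    then have "sig (c j) i = sig (c j) j"
      by (auto simp: \<iota>_def)
    then show "i = j"
      using permutes_inj[OF sig_perm[OF c_range[OF ij(2)]]] by (simp add: inj_eq)
  qed
  moreover have "indep_vars (\<lambda>_. borel) (\<lambda>(i, s). Wst i s) (\<iota> ` {1..n})"
    using Wst_indep by (rule indep_vars_subset) (use c_range in \<open>auto simp: \<iota>_def\<close>)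
  ultimately have "indep_vars (\<lambda>_. borel) (\<lambda>i. Wst (sig (c i) i) (c i)) {1..n}"
    using indep_vars_reindex by (fastforce simp: \<iota>_def)
  then have "distr M (PiM {1..n} (\<lambda>_. borel)) (coupled_sample c)
      = PiM {1..n} (\<lambda>i. distr M borel (Wst (sig (c i) i) (c i)))"
    unfolding coupled_sample_def using Wst_rv by (simp add: distr_PiM_indep_vars)
  also have "\<dots> = PiM {1..n} (\<lambda>i. uniform_measure Q0 (stratum (c i)))"
    by (intro PiM_cong refl distr_Wst c_range)
  finally show ?thesis .
qed

lemma prob_sample_strata:
  assumes c: "c \<in> stratum_vectors" and F: "F \<in> sets (PiM {1..n} (\<lambda>_. borel))"
  shows "prob {\<omega>\<in>space M. sample \<omega> \<in> F \<and> strata \<omega> = c}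
    = prob {\<omega>\<in>space M. coupled_sample c \<omega> \<in> F} * prob {\<omega>\<in>space M. strata \<omega> = c}"
proof -
  interpret Q0: prob_space Q0
    by (rule prob_space_Q0)
  interpret P: product_prob_space "\<lambda>_. Q0" ..
  interpret P\<^sub>n: prob_space "PiM {1..n} (\<lambda>_. Q0)"
    by (rule prob_space_PiM) (rule Q0.prob_space_axioms)
  let ?T = "PiE {1..n} (\<lambda>i. stratum (c i))"
  have c_range: "c i \<in> {1..SS}" if "i \<in> {1..n}" for i
    using c that by (auto simp: stratum_vectors_def)
  have stratum_pos: "0 < measure Q0 (stratum (c i))" if "i \<in> {1..n}" for i
    using measure_stratum_pos[OF c_range[OF that]] .
  have stratum_epos: "emeasure Q0 (stratum (c i)) \<noteq> 0" if "i \<in> {1..n}" for i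
    using stratum_pos[OF that] by (simp add: Q0.emeasure_eq_measure)
  have sets_P: "sets (PiM {1..n} (\<lambda>_. Q0)) = sets (PiM {1..n} (\<lambda>_. borel))"
    by (intro sets_PiM_cong) (simp_all add: sets_Q0)
  have T: "?T \<in> sets (PiM {1..n} (\<lambda>_. Q0))"
    using stratum_in_sets by (auto intro!: sets_PiM_I_finite)
  have "emeasure (PiM {1..n} (\<lambda>_. Q0)) ?T = ennreal (\<Prod>i\<in>{1..n}. measure Q0 (stratum (c i)))"
    using stratum_in_sets by (simp add: P.emeasure_PiM Q0.emeasure_eq_measure prod_ennreal)
  moreover have "0 < (\<Prod>i\<in>{1..n}. measure Q0 (stratum (c i)))"
    using stratum_pos by (rule prod_pos)
  ultimately have T_pos: "emeasure (PiM {1..n} (\<lambda>_. Q0)) ?T \<noteq> 0"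
    by (metis ennreal_eq_0_iff not_le)
  have prob_sample: "prob {\<omega>\<in>space M. sample \<omega> \<in> G} = measure (PiM {1..n} (\<lambda>_. Q0)) G"
    if "G \<in> sets (PiM {1..n} (\<lambda>_. borel))" for G
    using measure_distr[OF measurable_sample that] unfolding distr_sample
    by (simp add: vimage_def Int_def conj_commute)
  have "prob {\<omega>\<in>space M. coupled_sample c \<omega> \<in> F}
      = measure (PiM {1..n} (\<lambda>i. uniform_measure Q0 (stratum (c i)))) F"
    using measure_distr[OF measurable_coupled_sample[of c] F] unfolding distr_coupled_sample[OF c]
    by (simp add: vimage_def Int_def conj_commute)
  also have "\<dots> = measure (uniform_measure (PiM {1..n} (\<lambda>_. Q0)) ?T) F"
    by (simp only: uniform_measure_PiM_PiE[OF finite_atLeastAtMost prob_space_Q0 stratum_in_sets stratum_epos])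
  also have "\<dots> = measure (PiM {1..n} (\<lambda>_. Q0)) (?T \<inter> F) / measure (PiM {1..n} (\<lambda>_. Q0)) ?T"
    using F sets_P by (intro measure_uniform_measure[OF T_pos P\<^sub>n.emeasure_finite[folded infinity_ennreal_def]]) simp
  finally have coupled: "prob {\<omega>\<in>space M. coupled_sample c \<omega> \<in> F}
      = measure (PiM {1..n} (\<lambda>_. Q0)) (?T \<inter> F) / measure (PiM {1..n} (\<lambda>_. Q0)) ?T" .
  have T_borel: "?T \<in> sets (PiM {1..n} (\<lambda>_. borel))"
    using T sets_P by simp
  have "{\<omega>\<in>space M. strata \<omega> = c} = {\<omega>\<in>space M. sample \<omega> \<in> ?T}"
    using strata_eq_iff[OF c] by blast
  then have strata: "prob {\<omega>\<in>space M. strata \<omega> = c} = measure (PiM {1..n} (\<lambda>_. Q0)) ?T"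
    using prob_sample[OF T_borel] by simp
  have "{\<omega>\<in>space M. sample \<omega> \<in> F \<and> strata \<omega> = c} = {\<omega>\<in>space M. sample \<omega> \<in> ?T \<inter> F}"
    using strata_eq_iff[OF c] by blast
  then have sample: "prob {\<omega>\<in>space M. sample \<omega> \<in> F \<and> strata \<omega> = c} = measure (PiM {1..n} (\<lambda>_. Q0)) (?T \<inter> F)"
    using prob_sample[OF sets.Int[OF T_borel F]] by simp
  show ?thesis
    using T_pos P\<^sub>n.emeasure_eq_measure[of ?T] unfolding coupled strata sample by simp
qed

lemma indep_coupling_sample_events: "indep_set coupling_events sample_events"
  using Wst_indep_rest unfolding coupling_events_def sample_events_def .

lemma coupled_sample_event:
  assumes c: "c \<in> stratum_vectors" and F: "F \<in> sets (PiM {1..n} (\<lambda>_. borel))"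
  shows "{\<omega>\<in>space M. coupled_sample c \<omega> \<in> F} \<in> coupling_events"
proof -
  define pick where "pick g = (\<lambda>i\<in>{1..n}. g (sig (c i) i, c i))" for g :: "nat \<times> nat \<Rightarrow> 'k unit_rec"
  have pick: "pick \<in> PiM (UNIV \<times> {1..SS}) (\<lambda>_. borel) \<rightarrow>\<^sub>M PiM {1..n} (\<lambda>_. borel)"
    unfolding pick_def using c
    by (intro measurable_restrict measurable_component_singleton) (auto simp: stratum_vectors_def)
  have "{\<omega>\<in>space M. pick (\<lambda>p\<in>UNIV \<times> {1..SS}. Wst (fst p) (snd p) \<omega>) \<in> F} \<in> coupling_events"
    unfolding coupling_events_def
    by (rule measurable_preimage_in_vimage_algebra[OF pick F]) (auto simp: space_PiM)
  moreover have "pick (\<lambda>p\<in>UNIV \<times> {1..SS}. Wst (fst p) (snd p) \<omega>) = coupled_sample c \<omega>" for \<omega>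
    using c unfolding pick_def coupled_sample_def stratum_vectors_def by (intro restrict_ext) auto
  ultimately show ?thesis
    by simp
qed

lemma observed_event:
  assumes B: "B \<in> sets (PiM {1..n} (\<lambda>_. obs_measure))"
    and a: "a \<in> extensional {1..n}" and c: "c \<in> extensional {1..n}"
  shows "{\<omega>\<in>space M. observed \<omega> \<in> B \<and> treatment \<omega> = a \<and> strata \<omega> = c} \<in> sample_events"
proof -
  let ?D = "PiM UNIV (\<lambda>_. borel) \<Otimes>\<^sub>M PiM UNIV (\<lambda>_. PiM UNIV (\<lambda>_. count_space UNIV))
    :: ((nat \<Rightarrow> 'k unit_rec) \<times> (nat \<Rightarrow> nat \<Rightarrow> bool)) measure"
  define h where "h x = ((\<lambda>i\<in>{1..n}. obs (fst x i) (snd x n i)),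
    (\<lambda>i\<in>{1..n}. snd x n i), (\<lambda>i\<in>{1..n}. Sf (Zc (fst x i))))" for x :: "(nat \<Rightarrow> 'k unit_rec) \<times> (nat \<Rightarrow> nat \<Rightarrow> bool)"
  have [measurable]: "(\<lambda>x. fst x i) \<in> ?D \<rightarrow>\<^sub>M borel" for i
    by (rule measurable_compose[OF measurable_fst measurable_component_singleton]) simp
  have "(\<lambda>x. snd x n) \<in> ?D \<rightarrow>\<^sub>M PiM UNIV (\<lambda>_. count_space UNIV)"
    by (rule measurable_compose[OF measurable_snd measurable_component_singleton]) simp
  then have [measurable]: "(\<lambda>x. snd x n i) \<in> ?D \<rightarrow>\<^sub>M count_space UNIV" for i
    by (rule measurable_compose[OF _ measurable_component_singleton]) simp
  have "h \<in> ?D \<rightarrow>\<^sub>M PiM {1..n} (\<lambda>_. obs_measure) \<Otimes>\<^sub>M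
      (PiM {1..n} (\<lambda>_. count_space UNIV) \<Otimes>\<^sub>M PiM {1..n} (\<lambda>_. count_space UNIV))"
    unfolding h_def using Sf_meas by measurable
  moreover have "B \<times> ({a} \<times> {c}) \<in> sets (PiM {1..n} (\<lambda>_. obs_measure) \<Otimes>\<^sub>M
      (PiM {1..n} (\<lambda>_. count_space UNIV) \<Otimes>\<^sub>M PiM {1..n} (\<lambda>_. count_space UNIV)))"
    using B a c by (intro pair_measureI singleton_in_sets_PiM_count_space) auto
  ultimately have "{\<omega>\<in>space M. h (\<lambda>i. W i \<omega>, \<lambda>m i. A m i \<omega>) \<in> B \<times> ({a} \<times> {c})} \<in> sample_events"
    unfolding sample_events_def by (rule measurable_preimage_in_vimage_algebra) (simp add: space_pair_measure space_PiM)
  moreover have "h (\<lambda>i. W i \<omega>, \<lambda>m i. A m i \<omega>) = (observed \<omega>, treatment \<omega>, strata \<omega>)" for \<omega>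
    by (simp add: h_def observed_def treatment_def strata_def)
  ultimately show ?thesis
    by simp
qed

lemma treatment_strata_event:
  assumes "a \<in> extensional {1..n}" and "c \<in> extensional {1..n}"
  shows "{\<omega>\<in>space M. treatment \<omega> = a \<and> strata \<omega> = c} \<in> sample_events"
proof -
  have "{\<omega>\<in>space M. observed \<omega> \<in> space (PiM {1..n} (\<lambda>_. obs_measure)) \<and> treatment \<omega> = a \<and> strata \<omega> = c}
      = {\<omega>\<in>space M. treatment \<omega> = a \<and> strata \<omega> = c}"
    using measurable_space[OF measurable_observed] by blast
  then show ?thesis
    using observed_event[OF sets.top assms] by simp
qed

lemma cond_indep_sample_treatment: "cond_indep_disc M
    (PiM {1..n} (\<lambda>_. borel)) sample (PiM {1..n} (\<lambda>_. count_space UNIV)) treatment strata"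
  using A_cond_indep unfolding sample_def treatment_def strata_def .

lemma treatment_strata_in_events:
  assumes "a \<in> extensional {1..n}" and "c \<in> extensional {1..n}"
  shows "{\<omega>\<in>space M. treatment \<omega> = a \<and> strata \<omega> = c} \<in> events"
    and "{\<omega>\<in>space M. strata \<omega> = c} \<in> events"
proof -
  have T: "treatment -` {a} \<inter> space M \<in> events" and S: "strata -` {c} \<inter> space M \<in> events"
    using assms by (auto intro!: measurable_sets[OF measurable_treatment] measurable_sets[OF measurable_strata]
        singleton_in_sets_PiM_count_space)
  have "{\<omega>\<in>space M. treatment \<omega> = a \<and> strata \<omega> = c} = (treatment -` {a} \<inter> space M) \<inter> (strata -` {c} \<inter> space M)"
    and "{\<omega>\<in>space M. strata \<omega> = c} = strata -` {c} \<inter> space M"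
    by auto
  then show "{\<omega>\<in>space M. treatment \<omega> = a \<and> strata \<omega> = c} \<in> events" "{\<omega>\<in>space M. strata \<omega> = c} \<in> events"
    using T S by auto
qed

theorem cond_indep_observed_coupled_observed: "cond_indep_disc M
    (PiM {1..n} (\<lambda>_. obs_measure)) observed (PiM {1..n} (\<lambda>_. obs_measure)) coupled_observed
    (\<lambda>\<omega>. (treatment \<omega>, strata \<omega>))"
proof (rule cond_indep_disc_indep_set[OF indep_coupling_sample_events,
      where Y = "\<lambda>(a, c) \<omega>. observe a (coupled_sample c \<omega>)"])
  fix k assume "k \<in> (\<lambda>\<omega>. (treatment \<omega>, strata \<omega>)) ` space M"
  then obtain a c where k: "k = (a, c)" and a: "a \<in> extensional {1..n}" and c: "c \<in> stratum_vectors"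
    using strata_in_stratum_vectors by (auto simp: treatment_def)
  then have c_ext: "c \<in> extensional {1..n}"
    by (simp add: stratum_vectors_def PiE_def)
  show "{\<omega>\<in>space M. observed \<omega> \<in> B \<and> (treatment \<omega>, strata \<omega>) = k} \<in> sample_events"
    if "B \<in> sets (PiM {1..n} (\<lambda>_. obs_measure))" for B
    using observed_event[OF that a c_ext] by (simp add: k)
  show "{\<omega>\<in>space M. (treatment \<omega>, strata \<omega>) = k} \<in> sample_events"
    using treatment_strata_event[OF a c_ext] by (simp add: k)
  show "{\<omega>\<in>space M. (\<lambda>(a, c) \<omega>. observe a (coupled_sample c \<omega>)) k \<omega> \<in> B} \<in> coupling_events"
    if "B \<in> sets (PiM {1..n} (\<lambda>_. obs_measure))" for B
  proof -
    have "{\<omega>\<in>space M. observe a (coupled_sample c \<omega>) \<in> B}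
        = {\<omega>\<in>space M. coupled_sample c \<omega> \<in> observe a -` B \<inter> space (PiM {1..n} (\<lambda>_. borel))}"
      using measurable_space[OF measurable_coupled_sample] by auto
    then show ?thesis
      using coupled_sample_event[OF c measurable_sets[OF measurable_observe that]] by (simp add: k)
  qed
next
  show "coupled_observed \<omega> = (\<lambda>(a, c) \<omega>. observe a (coupled_sample c \<omega>)) (treatment \<omega>, strata \<omega>) \<omega>" for \<omega>
    by (simp add: coupled_observed_eq_observe)
qed

theorem distr_coupled_observed_strata:
  "distr M (PiM {1..n} (\<lambda>_. obs_measure) \<Otimes>\<^sub>M PiM {1..n} (\<lambda>_. count_space UNIV))
      (\<lambda>\<omega>. (coupled_observed \<omega>, strata \<omega>))
    = distr M (PiM {1..n} (\<lambda>_. obs_measure) \<Otimes>\<^sub>M PiM {1..n} (\<lambda>_. count_space UNIV))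
      (\<lambda>\<omega>. (observed \<omega>, strata \<omega>))"
proof (rule distr_eq_finite_partition[where C = "\<lambda>\<omega>. (treatment \<omega>, strata \<omega>)"
      and K = "PiE {1..n} (\<lambda>_. UNIV) \<times> stratum_vectors"])
  show "finite (PiE {1..n} (\<lambda>_. UNIV :: bool set) \<times> stratum_vectors)"
    by (auto simp: stratum_vectors_def intro!: finite_PiE)
  show "(\<lambda>\<omega>. (treatment \<omega>, strata \<omega>)) ` space M \<subseteq> PiE {1..n} (\<lambda>_. UNIV) \<times> stratum_vectors"
    using strata_in_stratum_vectors by (auto simp: treatment_def)
  fix k assume "k \<in> PiE {1..n} (\<lambda>_. UNIV :: bool set) \<times> stratum_vectors"
  then obtain a c where k: "k = (a, c)" and a: "a \<in> extensional {1..n}" and c: "c \<in> stratum_vectors"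
    by (auto simp: PiE_def)
  then have c_ext: "c \<in> extensional {1..n}"
    by (simp add: stratum_vectors_def PiE_def)
  show "{\<omega>\<in>space M. (treatment \<omega>, strata \<omega>) = k} \<in> events"
    using treatment_strata_in_events(1)[OF a c_ext] by (simp add: k)
  fix E :: "((nat \<Rightarrow> real \<times> bool \<times> (real ^ 'k)) \<times> (nat \<Rightarrow> nat)) set"
  assume E: "E \<in> sets (PiM {1..n} (\<lambda>_. obs_measure) \<Otimes>\<^sub>M PiM {1..n} (\<lambda>_. count_space UNIV))"
  define F where "F = (\<lambda>u. (observe a u, c)) -` E \<inter> space (PiM {1..n} (\<lambda>_. borel))"
  have "c \<in> space (PiM {1..n} (\<lambda>_. count_space UNIV))"
    using c by (simp add: stratum_vectors_def space_PiM PiE_def)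
  then have F: "F \<in> sets (PiM {1..n} (\<lambda>_. borel))"
    unfolding F_def by (intro measurable_sets[OF _ E]) measurable
  have "{\<omega>\<in>space M. (coupled_observed \<omega>, strata \<omega>) \<in> E \<and> (treatment \<omega>, strata \<omega>) = k}
      = {\<omega>\<in>space M. coupled_sample c \<omega> \<in> F \<and> treatment \<omega> = a \<and> strata \<omega> = c}"
    using measurable_space[OF measurable_coupled_sample] by (auto simp: F_def k coupled_observed_eq_observe)
  moreover have "{\<omega>\<in>space M. (observed \<omega>, strata \<omega>) \<in> E \<and> (treatment \<omega>, strata \<omega>) = k}
      = {\<omega>\<in>space M. sample \<omega> \<in> F \<and> treatment \<omega> = a \<and> strata \<omega> = c}"
    using measurable_space[OF measurable_sample] by (auto simp: F_def k observed_eq_observe)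
  moreover have "prob {\<omega>\<in>space M. sample \<omega> \<in> F \<and> treatment \<omega> = a \<and> strata \<omega> = c}
      = prob {\<omega>\<in>space M. coupled_sample c \<omega> \<in> F \<and> treatment \<omega> = a \<and> strata \<omega> = c}"
    using indep_coupling_sample_events coupled_sample_event[OF c F] treatment_strata_event[OF a c_ext]
      treatment_strata_in_events(2)[OF a c_ext] cond_indep_sample_treatment F
      singleton_in_sets_PiM_count_space[OF _ a] prob_sample_strata[OF c F]
    by (rule prob_eq_by_independent_conditional_copy) simp
  ultimately show "prob {\<omega>\<in>space M. (coupled_observed \<omega>, strata \<omega>) \<in> E \<and> (treatment \<omega>, strata \<omega>) = k}
      = prob {\<omega>\<in>space M. (observed \<omega>, strata \<omega>) \<in> E \<and> (treatment \<omega>, strata \<omega>) = k}"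
    by simp
qed measurable

end

theorem lemma7:
  fixes M :: "'o measure"
    and Q0 :: "'k::finite unit_rec measure"
    and Sf :: "real ^ 'k \<Rightarrow> nat" and SS :: nat and \<pi> :: "nat \<Rightarrow> real"
    and W :: "nat \<Rightarrow> 'o \<Rightarrow> 'k unit_rec"
    and A :: "nat \<Rightarrow> nat \<Rightarrow> 'o \<Rightarrow> bool"
    and Wst :: "nat \<Rightarrow> nat \<Rightarrow> 'o \<Rightarrow> 'k unit_rec"
    and n :: nat and sig :: "nat \<Rightarrow> nat \<Rightarrow> nat"
  assumes M: "prob_space M"
    (* Q0: density w.r.t. a product of sigma-finite measures, finite second moments *)
    and Q0_density: "\<exists>(\<mu>0::real measure) (\<mu>1::real measure) (\<mu>Z::(real ^ 'k) measure) f.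
        sigma_finite_measure \<mu>0 \<and> sigma_finite_measure \<mu>1 \<and> sigma_finite_measure \<mu>Z \<and>
        sets \<mu>0 = sets borel \<and> sets \<mu>1 = sets borel \<and> sets \<mu>Z = sets borel \<and>
        f \<in> borel_measurable (\<mu>0 \<Otimes>\<^sub>M (\<mu>1 \<Otimes>\<^sub>M \<mu>Z)) \<and>
        Q0 = density (\<mu>0 \<Otimes>\<^sub>M (\<mu>1 \<Otimes>\<^sub>M \<mu>Z)) f"
    and Q0_mom0: "integrable Q0 (\<lambda>w. (Y0 w)\<^sup>2)"
    and Q0_mom1: "integrable Q0 (\<lambda>w. (Y1 w)\<^sup>2)"
    (* strata *)
    and Sf_meas: "Sf \<in> borel \<rightarrow>\<^sub>M count_space UNIV"
    and Sf_range: "\<And>z. Sf z \<in> {1..SS}"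
    and \<pi>_range: "\<And>s. s \<in> {1..SS} \<Longrightarrow> 0 < \<pi> s \<and> \<pi> s < 1"
    (* i.i.d. sample from Q0 *)
    and W_rv: "\<And>i. W i \<in> M \<rightarrow>\<^sub>M borel"
    and W_indep: "prob_space.indep_vars M (\<lambda>_. borel) W UNIV"
    and W_distr: "\<And>i. distr M borel (W i) = Q0"
    (* treatments *)
    and A_rv: "\<And>m i. A m i \<in> M \<rightarrow>\<^sub>M count_space UNIV"
    and A_cond_indep: "\<And>m. cond_indep_disc M
        (Pi\<^sub>M {1..m} (\<lambda>_. borel)) (\<lambda>\<omega>. \<lambda>i\<in>{1..m}. W i \<omega>)
        (Pi\<^sub>M {1..m} (\<lambda>_. count_space UNIV)) (\<lambda>\<omega>. \<lambda>i\<in>{1..m}. A m i \<omega>)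
        (\<lambda>\<omega>. \<lambda>i\<in>{1..m}. Sf (Zc (W i \<omega>)))"
    and N_conv: "\<And>s \<epsilon>. s \<in> {1..SS} \<Longrightarrow> \<epsilon> > 0 \<Longrightarrow>
        (\<lambda>m. measure M {\<omega>\<in>space M.
            \<bar>real (card {i\<in>{1..m}. A m i \<omega> \<and> Sf (Zc (W i \<omega>)) = s})
              / real (card {i\<in>{1..m}. Sf (Zc (W i \<omega>)) = s}) - \<pi> s\<bar> > \<epsilon>})
        \<longlonglongrightarrow> 0"
    (* coupling construction *)
    and Wst_rv: "\<And>i s. Wst i s \<in> M \<rightarrow>\<^sub>M borel"
    and Wst_indep: "prob_space.indep_vars M (\<lambda>_. borel) (\<lambda>(i, s). Wst i s) (UNIV \<times> {1..SS})"
    and Wst_distr: "\<And>i s B. s \<in> {1..SS} \<Longrightarrow> B \<in> sets borel \<Longrightarrow>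
        measure M {\<omega>\<in>space M. Wst i s \<omega> \<in> B}
          = measure Q0 {w\<in>space Q0. w \<in> B \<and> Sf (Zc w) = s} / measure Q0 {w\<in>space Q0. Sf (Zc w) = s}"
    and Q0_strata_pos: "\<And>s. s \<in> {1..SS} \<Longrightarrow> measure Q0 {w\<in>space Q0. Sf (Zc w) = s} > 0"
    and Wst_indep_rest: "prob_space.indep_set M
        (sets (vimage_algebra (space M) (\<lambda>\<omega>. \<lambda>p\<in>UNIV \<times> {1..SS}. Wst (fst p) (snd p) \<omega>)
                 (Pi\<^sub>M (UNIV \<times> {1..SS}) (\<lambda>_. borel))))
        (sets (vimage_algebra (space M) (\<lambda>\<omega>. (\<lambda>i. W i \<omega>, \<lambda>m i. A m i \<omega>))
                 (Pi\<^sub>M UNIV (\<lambda>_. borel) \<Otimes>\<^sub>M Pi\<^sub>M UNIV (\<lambda>_. Pi\<^sub>M UNIV (\<lambda>_. count_space UNIV)))))"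
    (* permutations *)
    and sig_perm: "\<And>s. s \<in> {1..SS} \<Longrightarrow> sig s permutes {1..n}"
  shows "distr M (Pi\<^sub>M {1..n} (\<lambda>_. obs_measure) \<Otimes>\<^sub>M Pi\<^sub>M {1..n} (\<lambda>_. count_space UNIV))
            (\<lambda>\<omega>. (\<lambda>i\<in>{1..n}. obs_star Sf SS sig (\<lambda>j s. Wst j s \<omega>) i (A n i \<omega>) (Zc (W i \<omega>)),
                   \<lambda>i\<in>{1..n}. Sf (Zc (W i \<omega>))))
       = distr M (Pi\<^sub>M {1..n} (\<lambda>_. obs_measure) \<Otimes>\<^sub>M Pi\<^sub>M {1..n} (\<lambda>_. count_space UNIV))
            (\<lambda>\<omega>. (\<lambda>i\<in>{1..n}. obs (W i \<omega>) (A n i \<omega>),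
                   \<lambda>i\<in>{1..n}. Sf (Zc (W i \<omega>))))
     \<and> cond_indep_disc M
         (Pi\<^sub>M {1..n} (\<lambda>_. obs_measure)) (\<lambda>\<omega>. \<lambda>i\<in>{1..n}. obs (W i \<omega>) (A n i \<omega>))
         (Pi\<^sub>M {1..n} (\<lambda>_. obs_measure))
           (\<lambda>\<omega>. \<lambda>i\<in>{1..n}. obs_star Sf SS sig (\<lambda>j s. Wst j s \<omega>) i (A n i \<omega>) (Zc (W i \<omega>)))
         (\<lambda>\<omega>. (\<lambda>i\<in>{1..n}. A n i \<omega>, \<lambda>i\<in>{1..n}. Sf (Zc (W i \<omega>))))"
proof -
  interpret stratified_coupling M Q0 Sf SS W A Wst n sig
    by (intro stratified_coupling.intro stratified_coupling_axioms.intro)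
      (fact M Sf_meas Sf_range W_rv W_indep W_distr A_rv A_cond_indep Wst_rv Wst_indep Wst_distr
        Q0_strata_pos Wst_indep_rest sig_perm)+
  show ?thesis
    using distr_coupled_observed_strata cond_indep_observed_coupled_observed
    unfolding coupled_observed_def observed_def treatment_def strata_def by blast
qed

end
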